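(* Let $\mathcal V$ be a finite set of variables, $\mathcal P$ a finite set of labels, and $\mathcal C$ a finite set of nonempty subsets (hyperedges) of $\mathcal V$. For each $C\in\mathcal C$ let $\mathcal D_C\subseteq\mathcal P^C$ be a set of labelings of $C$ and let $\hat\theta_{C,\vec d}\le 0$ for $\vec d\in\mathcal D_C$, defining the sparse pattern-based potential $\theta_C(\vec x_C)=\hat\theta_{C,\vec d}$ if $\vec x_C=\vec d\in\mathcal D_C$ and $\theta_C(\vec x_C)=0$ otherwise. For binary variables $y_{ip}\in\{0,1\}$ ($i\in\mathcal V,p\in\mathcal P$) and $z_{C,\vec d}\in\{0,1\}$ ($C\in\mathcal C,\vec d\in\mathcal D_C$) let $$E^*_I(\vec y,\vec z)=-\sum_{C\in\mathcal C}\sum_{\vec d\in\mathcal D_C}\hat\theta_{C,\vec d}\Big((|C|-1)z_{C,\vec d}-\sum_{\ell\in C}y_{\ell d_\ell}z_{C,\vec d}\Big),$$ and for $\vec\lambda\in\mathbb R^{\mathcal V}$ let $D(\vec\lambda)=\min_{\vec y,\vec z\text{ binary}}\Big(E^*_I(\vec y,\vec z)+\sum_{i\in\mathcal V}\lambda_i\big(\sum_{p\in\mathcal P}y_{ip}-1\big)\Big)$. Then $\max_{\vec\lambda\in\mathbb R^{\mathcal V}}D(\vec\lambda)$ equals the optimal value of the linear program $$\min_{\vec y}\ \sum_{C\in\mathcal C}\sum_{\vec d\in\mathcal D_C}\hat\theta_{C,\vec d}\,y_{C,\vec d}$$ subject to $y_{ip}\in[0,1]$ for all $i\in\mathcal V,p\in\mathcal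 P$; $y_{C,\vec d}\in[0,1]$ for all $C\in\mathcal C,\vec d\in\mathcal D_C$; $y_{C,\vec d}\le y_{\ell d_\ell}$ for all $C\in\mathcal C$, $\vec d\in\mathcal D_C$, $\ell\in C$; and $\sum_{p\in\mathcal P}y_{ip}=1$ for all $i\in\mathcal V$.
   Context: A labeling $\vec d\in\mathcal P^C$ of a hyperedge $C$ is a map $C\to\mathcal P$, and $d_\ell$ denotes its value at $\ell\in C$. The energy to be minimized is $E(\vec x)=\sum_{C\in\mathcal C}\theta_C(\vec x_C)$ over $\vec x\in\mathcal P^{\mathcal V}$; $y_{ip}$ are indicator variables of $x_i=p$, $E^*_I$ is a pairwise reformulation of the energy with auxiliary binary variables $z_{C,\vec d}$, and $D$ is the Lagrangian dual obtained by relaxing the consistency constraints $\sum_p y_{ip}=1$. *)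

theory Defs
  imports "HOL-Library.FuncSet" Complex_Main
begin

(* Labelings of a hyperedge C are extensional maps C -> P (elements of PiE C P).
   Variables: y i p and z C d, real-valued. *)

definition E_star ::
  "'v set set \<Rightarrow> ('v set \<Rightarrow> ('v \<Rightarrow> 'p) set) \<Rightarrow> ('v set \<Rightarrow> ('v \<Rightarrow> 'p) \<Rightarrow> real)
   \<Rightarrow> ('v \<Rightarrow> 'p \<Rightarrow> real) \<Rightarrow> ('v set \<Rightarrow> ('v \<Rightarrow> 'p) \<Rightarrow> real) \<Rightarrow> real" where
  "E_star Cs D th y z =
     - (\<Sum>C\<in>Cs. \<Sum>d\<in>D C. th C d *
          ((real (card C) - 1) * z C d - (\<Sum>l\<in>C. y l (d l) * z C d)))"

definition binary_y :: "'v set \<Rightarrow> 'p set \<Rightarrow> ('v \<Rightarrow> 'p \<Rightarrow> real) \<Rightarrow> bool" where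
  "binary_y V P y \<longleftrightarrow> (\<forall>i\<in>V. \<forall>p\<in>P. y i p \<in> {0, 1})"

definition binary_z ::
  "'v set set \<Rightarrow> ('v set \<Rightarrow> ('v \<Rightarrow> 'p) set) \<Rightarrow> ('v set \<Rightarrow> ('v \<Rightarrow> 'p) \<Rightarrow> real) \<Rightarrow> bool" where
  "binary_z Cs D z \<longleftrightarrow> (\<forall>C\<in>Cs. \<forall>d\<in>D C. z C d \<in> {0, 1})"

definition lagr_dual ::
  "'v set \<Rightarrow> 'p set \<Rightarrow> 'v set set \<Rightarrow> ('v set \<Rightarrow> ('v \<Rightarrow> 'p) set)
   \<Rightarrow> ('v set \<Rightarrow> ('v \<Rightarrow> 'p) \<Rightarrow> real) \<Rightarrow> ('v \<Rightarrow> real) \<Rightarrow> real" where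
  "lagr_dual V P Cs D th lam =
     Min {E_star Cs D th y z + (\<Sum>i\<in>V. lam i * ((\<Sum>p\<in>P. y i p) - 1)) | y z.
            binary_y V P y \<and> binary_z Cs D z}"

definition lp_feasible ::
  "'v set \<Rightarrow> 'p set \<Rightarrow> 'v set set \<Rightarrow> ('v set \<Rightarrow> ('v \<Rightarrow> 'p) set)
   \<Rightarrow> ('v \<Rightarrow> 'p \<Rightarrow> real) \<Rightarrow> ('v set \<Rightarrow> ('v \<Rightarrow> 'p) \<Rightarrow> real) \<Rightarrow> bool" where
  "lp_feasible V P Cs D yv yc \<longleftrightarrow>
     (\<forall>i\<in>V. \<forall>p\<in>P. 0 \<le> yv i p \<and> yv i p \<le> 1) \<and>
     (\<forall>C\<in>Cs. \<forall>d\<in>D C. 0 \<le> yc C d \<and> yc C d \<le> 1) \<and>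
     (\<forall>C\<in>Cs. \<forall>d\<in>D C. \<forall>l\<in>C. yc C d \<le> yv l (d l)) \<and>
     (\<forall>i\<in>V. (\<Sum>p\<in>P. yv i p) = 1)"

definition lp_obj ::
  "'v set set \<Rightarrow> ('v set \<Rightarrow> ('v \<Rightarrow> 'p) set) \<Rightarrow> ('v set \<Rightarrow> ('v \<Rightarrow> 'p) \<Rightarrow> real)
   \<Rightarrow> ('v set \<Rightarrow> ('v \<Rightarrow> 'p) \<Rightarrow> real) \<Rightarrow> real" where
  "lp_obj Cs D th yc = (\<Sum>C\<in>Cs. \<Sum>d\<in>D C. th C d * yc C d)"

end

theory Submission
  imports Defs
begin

text \<open>
  For fixed \<open>y\<close>, the Lagrangian is minimized over binary \<open>z\<close> by
  \<open>z C d = min\<^sub>\<ell>\<^sub>\<in>\<^sub>C y \<ell> (d \<ell>)\<close>, because \<open>\<theta>\<close> is nonpositive. Hence the dual function is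
  the lower envelope of the affine functions \<open>\<lambda> \<mapsto> obj y + \<lambda>\<cdot>res y\<close>, one for each binary
  \<open>y\<close>, where \<open>res y i = (\<Sum>p\<in>P. y i p) - 1\<close>. Eliminating the multipliers one coordinate
  at a time (Fourier--Motzkin) shows that the maximum of such an envelope is the least
  objective value on the section \<open>res = 0\<close> of the convex hull of the points
  \<open>(res y, obj y)\<close>. That section is the image of the LP polytope: a fractional \<open>y\<close> is a
  convex combination of binary ones by threshold rounding, which commutes with the minima
  defining \<open>z\<close>, and since \<open>\<theta>\<close> is nonpositive an optimal LP point may take the pattern
  variables equal to these minima.
\<close>

section \<open>Fourier--Motzkin elimination\<close>

lemma least_of_finite_chain:
  fixes U :: "'k \<Rightarrow> 'a set"
  assumes "finite A" "A \<noteq> {}"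
    and chain: "\<And>j k. j \<in> A \<Longrightarrow> k \<in> A \<Longrightarrow> U j \<subseteq> U k \<or> U k \<subseteq> U j"
  shows "\<exists>p\<in>A. \<forall>k\<in>A. U p \<subseteq> U k"
proof -
  obtain m where "m \<in> U ` A" and minimal: "\<forall>b\<in>U ` A. b \<subseteq> m \<longrightarrow> m = b"
    using finite_has_minimal[of "U ` A"] assms(1,2) by auto
  then obtain p where p: "p \<in> A" "m = U p" by blast
  have "U p \<subseteq> U k" if "k \<in> A" for k
  proof (cases "U k \<subseteq> U p")
    case True
    then show ?thesis using minimal p(2) that by auto
  next
    case False
    then show ?thesis using chain[OF p(1) that] by blast
  qed
  with p show ?thesis by blast
qed

lemma ex_common_point_up_down_sets:
  fixes U :: "'k \<Rightarrow> 'a::linorder set"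
  assumes "finite A" "finite B"
    and up: "\<And>k s t. k \<in> A \<Longrightarrow> s \<in> U k \<Longrightarrow> s \<le> t \<Longrightarrow> t \<in> U k"
    and down: "\<And>k s t. k \<in> B \<Longrightarrow> s \<in> U k \<Longrightarrow> t \<le> s \<Longrightarrow> t \<in> U k"
    and nonempty: "\<And>k. k \<in> A \<union> B \<Longrightarrow> U k \<noteq> {}"
    and meet: "\<And>p q. p \<in> A \<Longrightarrow> q \<in> B \<Longrightarrow> U p \<inter> U q \<noteq> {}"
  shows "\<exists>t. \<forall>k\<in>A \<union> B. t \<in> U k"
proof -
  have least_A: "\<exists>p\<in>A. \<forall>k\<in>A. U p \<subseteq> U k" if "A \<noteq> {}"
  proof (rule least_of_finite_chain[OF assms(1) that])
    fix j k assume "j \<in> A" "k \<in> A"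
    then show "U j \<subseteq> U k \<or> U k \<subseteq> U j"
      using up[of j] up[of k] by (meson linear subsetI)
  qed
  have least_B: "\<exists>q\<in>B. \<forall>k\<in>B. U q \<subseteq> U k" if "B \<noteq> {}"
  proof (rule least_of_finite_chain[OF assms(2) that])
    fix j k assume "j \<in> B" "k \<in> B"
    then show "U j \<subseteq> U k \<or> U k \<subseteq> U j"
      using down[of j] down[of k] by (meson linear subsetI)
  qed
  show ?thesis
  proof (cases "A = {}"; cases "B = {}")
    assume "A \<noteq> {}" "B \<noteq> {}"
    then obtain p q where p: "p \<in> A" "\<forall>k\<in>A. U p \<subseteq> U k" and q: "q \<in> B" "\<forall>k\<in>B. U q \<subseteq> U k"
      using least_A least_B by blast
    obtain t where "t \<in> U p" "t \<in> U q" using meet[OF p(1) q(1)] by blast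
    then show ?thesis using p(2) q(2) by blast
  next
    assume "A \<noteq> {}" "B = {}"
    then obtain p where p: "p \<in> A" "\<forall>k\<in>A. U p \<subseteq> U k" using least_A by blast
    obtain t where "t \<in> U p" using nonempty[of p] p(1) by blast
    then show ?thesis using p(2) \<open>B = {}\<close> by blast
  next
    assume "A = {}" "B \<noteq> {}"
    then obtain q where q: "q \<in> B" "\<forall>k\<in>B. U q \<subseteq> U k" using least_B by blast
    obtain t where "t \<in> U q" using nonempty[of q] q(1) by blast
    then show ?thesis using q(2) \<open>A = {}\<close> by blast
  qed simp
qed

text \<open>The admissible shifts of \<open>k\<close> form an up-set if \<open>a k > 0\<close> and a down-set if
  \<open>a k < 0\<close>; for such \<open>p\<close> and \<open>q\<close> the two affine functions agree, with the value of the
  hypothesis \<open>mix\<close>, at \<open>t = (h q - h p) / (a p - a q)\<close>.\<close>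

lemma ex_common_shift:
  fixes h a :: "'k \<Rightarrow> real"
  assumes "finite K"
    and up: "\<And>s t. Q s \<Longrightarrow> s \<le> t \<Longrightarrow> Q t" and "Q c"
    and zero: "\<And>k. k \<in> K \<Longrightarrow> a k = 0 \<Longrightarrow> Q (h k)"
    and mix: "\<And>p q. p \<in> K \<Longrightarrow> q \<in> K \<Longrightarrow> 0 < a p \<Longrightarrow> a q < 0 \<Longrightarrow>
               Q ((a p * h q - a q * h p) / (a p - a q))"
  shows "\<exists>t. \<forall>k\<in>K. Q (h k + t * a k)"
proof -
  define U where "U k = {t. Q (h k + t * a k)}" for k
  define Kp where "Kp = {k\<in>K. 0 < a k}"
  define Km where "Km = {k\<in>K. a k < 0}"
  have "\<exists>t. \<forall>k\<in>Kp \<union> Km. t \<in> U k"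
  proof (rule ex_common_point_up_down_sets)
    show "finite Kp" "finite Km" using \<open>finite K\<close> by (simp_all add: Kp_def Km_def)
  next
    fix k s t assume "k \<in> Kp" "s \<in> U k" "s \<le> t"
    then show "t \<in> U k" unfolding U_def Kp_def
      by (auto intro: up elim!: order_trans[rotated] intro!: mult_right_mono)
  next
    fix k s t assume "k \<in> Km" "s \<in> U k" "t \<le> s"
    then show "t \<in> U k" unfolding U_def Km_def
      by (auto intro: up elim!: order_trans[rotated] intro!: mult_right_mono_neg)
  next
    fix k assume "k \<in> Kp \<union> Km"
    then have "a k \<noteq> 0" by (auto simp: Kp_def Km_def)
    then have "(c - h k) / a k \<in> U k" using \<open>Q c\<close> by (simp add: U_def)
    then show "U k \<noteq> {}" by blast
  next
    fix p q assume p: "p \<in> Kp" and q: "q \<in> Km"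
    define t where "t = (h q - h p) / (a p - a q)"
    have "a p - a q \<noteq> 0" using p q by (auto simp: Kp_def Km_def)
    then have "h p + t * a p = (a p * h q - a q * h p) / (a p - a q)"
      and "h q + t * a q = (a p * h q - a q * h p) / (a p - a q)"
      by (simp_all add: t_def field_simps)
    then have "t \<in> U p \<inter> U q" using mix p q by (simp add: U_def Kp_def Km_def)
    then show "U p \<inter> U q \<noteq> {}" by blast
  qed
  then obtain t where t: "\<forall>k\<in>Kp \<union> Km. Q (h k + t * a k)" by (auto simp: U_def)
  have "Q (h k + t * a k)" if "k \<in> K" for k
  proof (cases "a k = 0")
    case True
    then show ?thesis using zero that by simp
  next
    case False
    then show ?thesis using t that by (auto simp: Kp_def Km_def neq_iff)
  qed
  then show ?thesis by blast
qed

text \<open>Function spaces carry no \<open>real_vector\<close> instance, so convex hulls of points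
  (constraint vector, objective value) are introduced directly.\<close>

definition convex_comb ::
  "real \<Rightarrow> ('i \<Rightarrow> real) \<times> real \<Rightarrow> ('i \<Rightarrow> real) \<times> real \<Rightarrow> ('i \<Rightarrow> real) \<times> real"
  where "convex_comb \<alpha> x y = (\<lambda>i. \<alpha> * fst x i + (1 - \<alpha>) * fst y i, \<alpha> * snd x + (1 - \<alpha>) * snd y)"

inductive_set conv_hull :: "(('i \<Rightarrow> real) \<times> real) set \<Rightarrow> (('i \<Rightarrow> real) \<times> real) set"
  for K
where
  hull_base: "x \<in> K \<Longrightarrow> x \<in> conv_hull K"
| hull_comb: "x \<in> conv_hull K \<Longrightarrow> y \<in> conv_hull K \<Longrightarrow> 0 \<le> \<alpha> \<Longrightarrow> \<alpha> \<le> 1 \<Longrightarrow>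
    convex_comb \<alpha> x y \<in> conv_hull K"

lemma conv_hull_subset: "K' \<subseteq> conv_hull K \<Longrightarrow> conv_hull K' \<subseteq> conv_hull K"
proof
  fix x assume "x \<in> conv_hull K'" "K' \<subseteq> conv_hull K"
  then show "x \<in> conv_hull K" by induction (auto intro: hull_comb)
qed

lemma affine_convex_comb:
  "snd (convex_comb \<alpha> x y) + (\<Sum>i\<in>I. lam i * fst (convex_comb \<alpha> x y) i)
   = \<alpha> * (snd x + (\<Sum>i\<in>I. lam i * fst x i)) + (1 - \<alpha>) * (snd y + (\<Sum>i\<in>I. lam i * fst y i))"
proof -
  have "(\<Sum>i\<in>I. lam i * (\<alpha> * fst x i + (1 - \<alpha>) * fst y i))
      = \<alpha> * (\<Sum>i\<in>I. lam i * fst x i) + (1 - \<alpha>) * (\<Sum>i\<in>I. lam i * fst y i)"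
    by (simp add: distrib_left sum.distrib sum_distrib_left mult.left_commute)
  then show ?thesis by (simp add: convex_comb_def algebra_simps)
qed

lemma conv_hull_affine_lower_bound:
  assumes "x \<in> conv_hull K" and "\<And>k. k \<in> K \<Longrightarrow> c \<le> snd k + (\<Sum>i\<in>I. lam i * fst k i)"
  shows "c \<le> snd x + (\<Sum>i\<in>I. lam i * fst x i)"
  using assms(1)
proof induction
  case (hull_comb x y \<alpha>)
  have "c = \<alpha> * c + (1 - \<alpha>) * c" by (simp add: algebra_simps)
  also have "\<dots> \<le> \<alpha> * (snd x + (\<Sum>i\<in>I. lam i * fst x i)) + (1 - \<alpha>) * (snd y + (\<Sum>i\<in>I. lam i * fst y i))"
    using hull_comb by (intro add_mono mult_left_mono) auto
  finally show ?case by (simp only: affine_convex_comb)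
qed (rule assms(2))

lemma cancelling_convex_comb:
  fixes p q :: "('i \<Rightarrow> real) \<times> real" and I :: "'i set" and lam :: "'i \<Rightarrow> real"
  assumes "0 < fst p n" "fst q n < 0"
  defines "\<alpha> \<equiv> - fst q n / (fst p n - fst q n)"
    and "h \<equiv> \<lambda>k. snd k + (\<Sum>i\<in>I. lam i * fst k i)"
  shows "0 \<le> \<alpha>" "\<alpha> \<le> 1" "fst (convex_comb \<alpha> p q) n = 0"
    and "h (convex_comb \<alpha> p q) = (fst p n * h q - fst q n * h p) / (fst p n - fst q n)"
proof -
  have d: "fst p n - fst q n \<noteq> 0" using assms(1,2) by simp
  show "0 \<le> \<alpha>" "\<alpha> \<le> 1" using assms(1,2) by (simp_all add: \<alpha>_def divide_nonpos_pos le_divide_eq)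
  show "fst (convex_comb \<alpha> p q) n = 0" using d by (simp add: \<alpha>_def convex_comb_def field_simps)
  have "1 - \<alpha> = fst p n / (fst p n - fst q n)" using d by (simp add: \<alpha>_def field_simps)
  then show "h (convex_comb \<alpha> p q) = (fst p n * h q - fst q n * h p) / (fst p n - fst q n)"
    unfolding h_def affine_convex_comb using d
    by (simp add: \<alpha>_def diff_divide_distrib add_divide_distrib algebra_simps)
qed

text \<open>Eliminating coordinate \<open>n\<close>: \<open>K'\<close> consists of the points of \<open>K\<close> with vanishing
  \<open>n\<close>-th coordinate and the combinations of a positive and a negative one that cancel it.\<close>

lemma fourier_motzkin_multipliers:
  fixes K :: "(('i \<Rightarrow> real) \<times> real) set"
  assumes "finite I" "finite K"
    and up: "\<And>s t. Q s \<Longrightarrow> s \<le> t \<Longrightarrow> Q t" and "Q c"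
    and "\<And>x. x \<in> conv_hull K \<Longrightarrow> \<forall>i\<in>I. fst x i = 0 \<Longrightarrow> Q (snd x)"
  shows "\<exists>lam. \<forall>k\<in>K. Q (snd k + (\<Sum>i\<in>I. lam i * fst k i))"
  using assms(1,2,5)
proof (induction I arbitrary: K rule: finite_induct)
  case empty
  then show ?case by (auto intro: hull_base)
next
  case (insert n I)
  define a where "a k = fst k n" for k :: "('i \<Rightarrow> real) \<times> real"
  define mix where "mix p q = convex_comb (- a q / (a p - a q)) p q" for p q
  define K' where "K' = {k\<in>K. a k = 0} \<union> (\<lambda>(p, q). mix p q) ` ({p\<in>K. 0 < a p} \<times> {q\<in>K. a q < 0})"
  note mix = cancelling_convex_comb[where n = n, folded a_def, folded mix_def]
  have "mix p q \<in> conv_hull K" if "p \<in> K" "q \<in> K" "0 < a p" "a q < 0" for p q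
    unfolding mix_def using that mix(1,2)[of p q] by (intro hull_comb hull_base) auto
  then have "K' \<subseteq> conv_hull K" by (auto simp: K'_def intro: hull_base)
  then have in_hull: "x \<in> conv_hull K" if "x \<in> conv_hull K'" for x
    using that conv_hull_subset by blast
  have a_zero: "a x = 0" if "x \<in> conv_hull K'" for x
    using that by induction (auto simp: K'_def mix(3), simp add: a_def convex_comb_def)
  have "Q (snd x)" if "x \<in> conv_hull K'" "\<forall>i\<in>I. fst x i = 0" for x
    using insert.prems(2)[OF in_hull[OF that(1)]] a_zero[OF that(1)] that(2) by (simp add: a_def)
  moreover have "finite K'" using insert.prems(1) by (simp add: K'_def)
  ultimately obtain lam where lam: "\<forall>k\<in>K'. Q (snd k + (\<Sum>i\<in>I. lam i * fst k i))"
    using insert.IH by blast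
  define h where "h k = snd k + (\<Sum>i\<in>I. lam i * fst k i)" for k
  have "\<exists>t. \<forall>k\<in>K. Q (h k + t * a k)"
  proof (rule ex_common_shift[where Q = Q, OF insert.prems(1) up \<open>Q c\<close>])
    fix k assume "k \<in> K" "a k = 0"
    then show "Q (h k)" using lam by (auto simp: h_def K'_def)
  next
    fix p q assume pq: "p \<in> K" "q \<in> K" "0 < a p" "a q < 0"
    then have "Q (h (mix p q))" using lam by (force simp: h_def K'_def)
    then show "Q ((a p * h q - a q * h p) / (a p - a q))"
      using mix(4)[where I = I and lam = lam, OF pq(3,4), folded h_def] by simp
  qed
  then obtain t where t: "\<forall>k\<in>K. Q (h k + t * a k)" ..
  have "(\<Sum>i\<in>insert n I. (lam(n := t)) i * fst k i) = (\<Sum>i\<in>I. lam i * fst k i) + t * a k" for k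
  proof -
    have "(\<Sum>i\<in>I. (lam(n := t)) i * fst k i) = (\<Sum>i\<in>I. lam i * fst k i)"
      using insert.hyps(2) by (intro sum.cong) auto
    then show ?thesis using insert.hyps by (simp add: a_def)
  qed
  then show ?case using t by (intro exI[of _ "lam(n := t)"]) (simp add: h_def add.assoc)
qed

section \<open>Sparse pattern-based potentials\<close>

lemma Min_binary:
  fixes w :: "'l \<Rightarrow> real"
  assumes "finite C" "C \<noteq> {}" "\<forall>l\<in>C. w l \<in> {0, 1}"
  shows "Min (w ` C) = (if \<forall>l\<in>C. w l = 1 then 1 else 0)"
proof (cases "\<forall>l\<in>C. w l = 1")
  case True
  then have "w ` C = {1}" using assms(2) by auto
  then show ?thesis using True by simp
next
  case False
  then obtain l0 where "l0 \<in> C" "w l0 = 0" using assms(3) by auto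
  then have "Min (w ` C) = 0"
    using assms by (intro antisym Min_le_iff[THEN iffD2] Min_ge_iff[THEN iffD2]) force+
  then show ?thesis using False by simp
qed

lemma sum_le_card_minus_one:
  fixes w :: "'l \<Rightarrow> real"
  assumes "finite C" "l0 \<in> C" "w l0 = 0" "\<forall>l\<in>C. w l \<le> 1"
  shows "(\<Sum>l\<in>C. w l) \<le> real (card C) - 1"
proof -
  have "(\<Sum>l\<in>C. w l) = (\<Sum>l\<in>C - {l0}. w l)"
    using assms(1-3) by (simp add: sum.remove)
  also have "\<dots> \<le> real (card (C - {l0})) * 1"
    using assms(4) by (intro sum_bounded_above) auto
  also have "\<dots> = real (card C) - 1"
  proof -
    have "card C \<ge> 1" using assms(1,2) by (metis One_nat_def card_gt_0_iff empty_iff Suc_leI)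
    then show ?thesis using assms(1,2) by (simp add: card_Diff_singleton of_nat_diff)
  qed
  finally show ?thesis .
qed

lemma pattern_term_ge:
  fixes w :: "'l \<Rightarrow> real"
  assumes "finite C" "C \<noteq> {}" "\<forall>l\<in>C. w l \<in> {0, 1}" "z \<in> {0, 1}" "\<theta> \<le> 0"
  shows "\<theta> * Min (w ` C) \<le> - (\<theta> * ((real (card C) - 1) * z - (\<Sum>l\<in>C. w l * z)))"
proof (cases "\<forall>l\<in>C. w l = 1")
  case True
  then show ?thesis using assms by (auto simp: Min_binary algebra_simps)
next
  case False
  then obtain l0 where "l0 \<in> C" "w l0 = 0" using assms(3) by auto
  then have "(\<Sum>l\<in>C. w l) \<le> real (card C) - 1"
    using assms(1,3) by (intro sum_le_card_minus_one) auto
  then have "0 \<le> (- \<theta>) * (z * ((real (card C) - 1) - (\<Sum>l\<in>C. w l)))"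
    using assms(4,5) by (intro mult_nonneg_nonneg) auto
  moreover have "(\<Sum>l\<in>C. w l * z) = z * (\<Sum>l\<in>C. w l)"
    by (simp add: sum_distrib_left mult.commute)
  moreover have "Min (w ` C) = 0" using False Min_binary[OF assms(1-3)] by simp
  ultimately show ?thesis by (simp add: algebra_simps)
qed

lemma pattern_term_Min:
  fixes w :: "'l \<Rightarrow> real"
  assumes "finite C" "C \<noteq> {}" "\<forall>l\<in>C. w l \<in> {0, 1}"
  shows "- (\<theta> * ((real (card C) - 1) * Min (w ` C) - (\<Sum>l\<in>C. w l * Min (w ` C)))) = \<theta> * Min (w ` C)"
  using assms by (simp add: Min_binary algebra_simps)

definition pattern_min :: "('v \<Rightarrow> 'p \<Rightarrow> real) \<Rightarrow> 'v set \<Rightarrow> ('v \<Rightarrow> 'p) \<Rightarrow> real"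
  where "pattern_min y C d = Min ((\<lambda>l. y l (d l)) ` C)"

lemma pattern_min_mono_comp:
  assumes "mono g" "finite C" "C \<noteq> {}"
  shows "pattern_min (\<lambda>i p. g (y i p)) C d = g (pattern_min y C d)"
  unfolding pattern_min_def using mono_Min_commute[OF assms(1), of "(\<lambda>l. y l (d l)) ` C"] assms(2,3)
  by (simp add: image_image)

lemma lp_obj_convex_comb:
  assumes "\<forall>C\<in>Cs. \<forall>d\<in>D C. u C d = \<alpha> * v C d + (1 - \<alpha>) * w C d"
  shows "lp_obj Cs D th u = \<alpha> * lp_obj Cs D th v + (1 - \<alpha>) * lp_obj Cs D th w"
proof -
  have "lp_obj Cs D th u = (\<Sum>C\<in>Cs. \<Sum>d\<in>D C. \<alpha> * (th C d * v C d) + (1 - \<alpha>) * (th C d * w C d))"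
    unfolding lp_obj_def using assms by (intro sum.cong refl) (simp add: ring_distribs mult.left_commute)
  then show ?thesis by (simp add: lp_obj_def sum.distrib sum_distrib_left)
qed

locale sparse_pattern_energy =
  fixes V :: "'v set" and P :: "'p set" and Cs :: "'v set set"
    and D :: "'v set \<Rightarrow> ('v \<Rightarrow> 'p) set"
    and th :: "'v set \<Rightarrow> ('v \<Rightarrow> 'p) \<Rightarrow> real"
  assumes finite_V: "finite V" and finite_P: "finite P" and P_nonempty: "P \<noteq> {}"
    and finite_Cs: "finite Cs"
    and hyperedge: "\<And>C. C \<in> Cs \<Longrightarrow> C \<noteq> {} \<and> C \<subseteq> V"
    and labelings: "\<And>C. C \<in> Cs \<Longrightarrow> D C \<subseteq> (C \<rightarrow>\<^sub>E P)"
    and th_nonpos: "\<And>C d. C \<in> Cs \<Longrightarrow> d \<in> D C \<Longrightarrow> th C d \<le> 0"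
begin

lemma finite_hyperedge: "C \<in> Cs \<Longrightarrow> finite C"
  using hyperedge finite_V finite_subset by blast

lemma finite_labelings: "C \<in> Cs \<Longrightarrow> finite (D C)"
  using labelings finite_hyperedge finite_P finite_PiE finite_subset by metis

lemma labeling_entry: "C \<in> Cs \<Longrightarrow> d \<in> D C \<Longrightarrow> l \<in> C \<Longrightarrow> l \<in> V \<and> d l \<in> P"
  using hyperedge labelings by blast

definition lagrangian ::
  "('v \<Rightarrow> real) \<Rightarrow> ('v \<Rightarrow> 'p \<Rightarrow> real) \<Rightarrow> ('v set \<Rightarrow> ('v \<Rightarrow> 'p) \<Rightarrow> real) \<Rightarrow> real"
  where "lagrangian lam y z = E_star Cs D th y z + (\<Sum>i\<in>V. lam i * ((\<Sum>p\<in>P. y i p) - 1))"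

text \<open>The residual is set to \<open>0\<close> outside \<open>V\<close>, so that \<open>relaxed_point y\<close> only depends on
  the entries of \<open>y\<close> in \<open>V \<times> P\<close>.\<close>

definition residual :: "('v \<Rightarrow> 'p \<Rightarrow> real) \<Rightarrow> 'v \<Rightarrow> real"
  where "residual y i = (if i \<in> V then (\<Sum>p\<in>P. y i p) - 1 else 0)"

definition relaxed_point :: "('v \<Rightarrow> 'p \<Rightarrow> real) \<Rightarrow> ('v \<Rightarrow> real) \<times> real"
  where "relaxed_point y = (residual y, lp_obj Cs D th (pattern_min y))"

definition binary_assignments :: "('v \<Rightarrow> 'p \<Rightarrow> real) set"
  where "binary_assignments = V \<rightarrow>\<^sub>E (P \<rightarrow>\<^sub>E {0, 1})"

definition integral_points :: "(('v \<Rightarrow> real) \<times> real) set"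
  where "integral_points = relaxed_point ` binary_assignments"

lemma lagrangian_cong:
  assumes "\<forall>i\<in>V. \<forall>p\<in>P. y i p = y' i p" "\<forall>C\<in>Cs. \<forall>d\<in>D C. z C d = z' C d"
  shows "lagrangian lam y z = lagrangian lam y' z'"
proof -
  have "E_star Cs D th y z = E_star Cs D th y' z'"
    unfolding E_star_def using assms labeling_entry
    by (intro arg_cong[where f = uminus] sum.cong refl) (simp cong: sum.cong)
  then show ?thesis using assms(1) by (simp add: lagrangian_def)
qed

lemma relaxed_point_cong:
  assumes "\<forall>i\<in>V. \<forall>p\<in>P. y i p = y' i p"
  shows "relaxed_point y = relaxed_point y'"
proof -
  have "pattern_min y C d = pattern_min y' C d" if "C \<in> Cs" "d \<in> D C" for C d
    unfolding pattern_min_def using assms labeling_entry[OF that] by (intro arg_cong[where f = Min]) auto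
  then show ?thesis using assms by (simp add: relaxed_point_def residual_def lp_obj_def fun_eq_iff)
qed

lemma binary_assignments_binary: "y \<in> binary_assignments \<Longrightarrow> binary_y V P y"
  by (auto simp: binary_assignments_def binary_y_def PiE_iff)

lemma restrict_in_binary_assignments:
  "binary_y V P y \<Longrightarrow> (\<lambda>i\<in>V. \<lambda>p\<in>P. y i p) \<in> binary_assignments"
  by (auto simp: binary_y_def binary_assignments_def)

lemma relaxed_point_in_integral_points: "binary_y V P y \<Longrightarrow> relaxed_point y \<in> integral_points"
proof -
  assume "binary_y V P y"
  moreover have "relaxed_point y = relaxed_point (\<lambda>i\<in>V. \<lambda>p\<in>P. y i p)"
    by (intro relaxed_point_cong) auto
  ultimately show ?thesis using restrict_in_binary_assignments by (simp add: integral_points_def)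
qed

lemma finite_binary_assignments: "finite binary_assignments"
  unfolding binary_assignments_def using finite_V finite_P by (intro finite_PiE) auto

lemma finite_integral_points: "finite integral_points"
  using finite_binary_assignments by (simp add: integral_points_def)

lemma integral_points_nonempty: "integral_points \<noteq> {}"
  unfolding integral_points_def binary_assignments_def using P_nonempty by (simp add: PiE_eq_empty_iff)

lemma finite_lagrangian_values:
  "finite {lagrangian lam y z | y z. binary_y V P y \<and> binary_z Cs D z}"
proof -
  let ?Z = "Pi\<^sub>E Cs (\<lambda>C. D C \<rightarrow>\<^sub>E {0, 1::real})"
  have "finite ?Z" using finite_Cs finite_labelings by (intro finite_PiE) auto
  moreover have "{lagrangian lam y z | y z. binary_y V P y \<and> binary_z Cs D z}
      \<subseteq> (\<lambda>(y, z). lagrangian lam y z) ` (binary_assignments \<times> ?Z)"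
  proof clarify
    fix y z assume "binary_y V P y" "binary_z Cs D z"
    moreover have "lagrangian lam y z
        = lagrangian lam (\<lambda>i\<in>V. \<lambda>p\<in>P. y i p) (\<lambda>C\<in>Cs. \<lambda>d\<in>D C. z C d)"
      by (intro lagrangian_cong) auto
    ultimately show "lagrangian lam y z \<in> (\<lambda>(y, z). lagrangian lam y z) ` (binary_assignments \<times> ?Z)"
      using restrict_in_binary_assignments by (force simp: binary_z_def)
  qed
  ultimately show ?thesis using finite_binary_assignments finite_subset by blast
qed

lemma binary_entries:
  "binary_y V P y \<Longrightarrow> C \<in> Cs \<Longrightarrow> d \<in> D C \<Longrightarrow> \<forall>l\<in>C. y l (d l) \<in> {0, 1}"
  using labeling_entry by (auto simp: binary_y_def)

lemma binary_pattern_min: "binary_y V P y \<Longrightarrow> binary_z Cs D (pattern_min y)"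
  unfolding binary_z_def pattern_min_def
  using binary_entries finite_hyperedge hyperedge by (simp add: Min_binary)

lemma lagrange_term_residual:
  "(\<Sum>i\<in>V. lam i * ((\<Sum>p\<in>P. y i p) - 1)) = (\<Sum>i\<in>V. lam i * residual y i)"
  by (simp add: residual_def)

lemma relaxed_value_le_lagrangian:
  assumes "binary_y V P y" "binary_z Cs D z"
  shows "snd (relaxed_point y) + (\<Sum>i\<in>V. lam i * fst (relaxed_point y) i) \<le> lagrangian lam y z"
proof -
  have "lp_obj Cs D th (pattern_min y) \<le> E_star Cs D th y z"
    unfolding lp_obj_def E_star_def pattern_min_def sum_negf[symmetric]
  proof (intro sum_mono)
    fix C d assume "C \<in> Cs" "d \<in> D C"
    then show "th C d * Min ((\<lambda>l. y l (d l)) ` C)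
        \<le> - (th C d * ((real (card C) - 1) * z C d - (\<Sum>l\<in>C. y l (d l) * z C d)))"
      using assms finite_hyperedge hyperedge binary_entries th_nonpos
      by (intro pattern_term_ge) (auto simp: binary_z_def)
  qed
  then show ?thesis by (simp add: lagrangian_def relaxed_point_def lagrange_term_residual)
qed

lemma lagrangian_pattern_min:
  assumes "binary_y V P y"
  shows "lagrangian lam y (pattern_min y)
    = snd (relaxed_point y) + (\<Sum>i\<in>V. lam i * fst (relaxed_point y) i)"
proof -
  have "E_star Cs D th y (pattern_min y) = lp_obj Cs D th (pattern_min y)"
    unfolding lp_obj_def E_star_def pattern_min_def sum_negf[symmetric]
    using assms finite_hyperedge hyperedge binary_entries
    by (intro sum.cong refl pattern_term_Min) auto
  then show ?thesis by (simp add: lagrangian_def relaxed_point_def lagrange_term_residual)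
qed

lemma lagr_dual_eq_Min:
  "lagr_dual V P Cs D th lam = Min ((\<lambda>k. snd k + (\<Sum>i\<in>V. lam i * fst k i)) ` integral_points)"
  (is "_ = Min (?f ` _)")
proof -
  let ?S = "{lagrangian lam y z | y z. binary_y V P y \<and> binary_z Cs D z}"
  have values_in_S: "?f ` integral_points \<subseteq> ?S"
  proof
    fix s assume "s \<in> ?f ` integral_points"
    then obtain y where y: "y \<in> binary_assignments" "s = ?f (relaxed_point y)"
      by (auto simp: integral_points_def)
    then have "s = lagrangian lam y (pattern_min y)"
      using binary_assignments_binary lagrangian_pattern_min by simp
    then show "s \<in> ?S" using binary_assignments_binary[OF y(1)] binary_pattern_min by blast
  qed
  have lower_bound: "\<exists>k\<in>integral_points. ?f k \<le> s" if "s \<in> ?S" for s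
  proof -
    from that obtain y z where s: "s = lagrangian lam y z" "binary_y V P y" "binary_z Cs D z"
      by blast
    then show ?thesis
      using relaxed_point_in_integral_points relaxed_value_le_lagrangian by blast
  qed
  have "?S \<noteq> {}" using values_in_S integral_points_nonempty by blast
  then have "Min ?S \<in> ?S" using finite_lagrangian_values by (rule Min_in[rotated])
  then obtain k where "k \<in> integral_points" "?f k \<le> Min ?S" using lower_bound by blast
  then have "Min (?f ` integral_points) \<le> Min ?S"
    using Min_le[OF finite_imageI[OF finite_integral_points], of "?f k" ?f] by simp
  moreover have "Min ?S \<le> Min (?f ` integral_points)"
    using values_in_S integral_points_nonempty finite_lagrangian_values by (intro Min_antimono) auto
  ultimately have "Min ?S = Min (?f ` integral_points)" by linarith
  then show ?thesis by (simp add: lagr_dual_def lagrangian_def)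
qed

lemma lagr_dual_attained:
  "\<exists>k\<in>integral_points. lagr_dual V P Cs D th lam = snd k + (\<Sum>i\<in>V. lam i * fst k i)"
  unfolding lagr_dual_eq_Min using finite_integral_points integral_points_nonempty Min_in by blast

definition lp_box :: "('v \<Rightarrow> 'p \<Rightarrow> real) \<Rightarrow> ('v set \<Rightarrow> ('v \<Rightarrow> 'p) \<Rightarrow> real) \<Rightarrow> bool"
  where "lp_box yv yc \<longleftrightarrow>
     (\<forall>i\<in>V. \<forall>p\<in>P. 0 \<le> yv i p \<and> yv i p \<le> 1) \<and>
     (\<forall>C\<in>Cs. \<forall>d\<in>D C. 0 \<le> yc C d \<and> yc C d \<le> 1) \<and>
     (\<forall>C\<in>Cs. \<forall>d\<in>D C. \<forall>l\<in>C. yc C d \<le> yv l (d l))"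

lemma lp_feasible_iff_lp_box:
  "lp_feasible V P Cs D yv yc \<longleftrightarrow> lp_box yv yc \<and> (\<forall>i\<in>V. residual yv i = 0)"
  by (auto simp: lp_feasible_def lp_box_def residual_def)

lemma residual_convex_comb:
  assumes "\<forall>i\<in>V. \<forall>p\<in>P. y i p = \<alpha> * y1 i p + (1 - \<alpha>) * y2 i p"
  shows "residual y i = \<alpha> * residual y1 i + (1 - \<alpha>) * residual y2 i"
proof (cases "i \<in> V")
  case True
  then have "(\<Sum>p\<in>P. y i p) = \<alpha> * (\<Sum>p\<in>P. y1 i p) + (1 - \<alpha>) * (\<Sum>p\<in>P. y2 i p)"
    using assms by (simp add: sum.distrib sum_distrib_left)
  then show ?thesis using True by (simp add: residual_def algebra_simps)
qed (simp add: residual_def)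

lemma lp_box_convex_comb:
  assumes "lp_box yv1 yc1" "lp_box yv2 yc2" "0 \<le> \<alpha>" "\<alpha> \<le> 1"
  shows "lp_box (\<lambda>i p. \<alpha> * yv1 i p + (1 - \<alpha>) * yv2 i p) (\<lambda>C d. \<alpha> * yc1 C d + (1 - \<alpha>) * yc2 C d)"
  using assms unfolding lp_box_def
  by (auto intro!: convex_bound_le add_mono mult_left_mono)

lemma conv_hull_integral_points_lp_box:
  "x \<in> conv_hull integral_points \<Longrightarrow> \<exists>yv yc. lp_box yv yc \<and> x = (residual yv, lp_obj Cs D th yc)"
proof (induction rule: conv_hull.induct)
  case (hull_base x)
  then obtain y where y: "y \<in> binary_assignments" "x = relaxed_point y"
    by (auto simp: integral_points_def)
  note binary = binary_assignments_binary[OF y(1)]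
  have "0 \<le> y i p \<and> y i p \<le> 1" if "i \<in> V" "p \<in> P" for i p
    using binary[unfolded binary_y_def, rule_format, OF that] by auto
  moreover have "0 \<le> pattern_min y C d \<and> pattern_min y C d \<le> 1" if "C \<in> Cs" "d \<in> D C" for C d
    using binary_pattern_min[OF binary, unfolded binary_z_def, rule_format, OF that] by auto
  moreover have "pattern_min y C d \<le> y l (d l)" if "C \<in> Cs" "l \<in> C" for C d l
    unfolding pattern_min_def using finite_hyperedge that by simp
  ultimately have "lp_box y (pattern_min y)" by (simp add: lp_box_def)
  then show ?case using y(2) by (auto simp: relaxed_point_def)
next
  case (hull_comb x x' \<alpha>)
  then obtain yv1 yc1 yv2 yc2 where
    box: "lp_box yv1 yc1" "lp_box yv2 yc2" and
    x: "x = (residual yv1, lp_obj Cs D th yc1)" "x' = (residual yv2, lp_obj Cs D th yc2)"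
    by blast
  define yv where "yv i p = \<alpha> * yv1 i p + (1 - \<alpha>) * yv2 i p" for i p
  define yc where "yc C d = \<alpha> * yc1 C d + (1 - \<alpha>) * yc2 C d" for C d
  have "lp_box yv yc"
    unfolding yv_def yc_def using box hull_comb.hyps(3,4) by (rule lp_box_convex_comb)
  moreover have "convex_comb \<alpha> x x' = (residual yv, lp_obj Cs D th yc)"
    using x residual_convex_comb[of yv \<alpha> yv1 yv2] lp_obj_convex_comb[of Cs D yc \<alpha> yc1 yc2 th]
    by (simp add: convex_comb_def fun_eq_iff yv_def yc_def)
  ultimately show ?case by blast
qed

text \<open>Threshold rounding: if the nonzero entries of \<open>y\<close> are at least \<open>s\<close>, then \<open>y\<close> is
  \<open>s\<close> times the indicator of its support plus \<open>1 - s\<close> times a rescaled rest. Both parts are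
  monotone images of \<open>y\<close>, and monotone maps commute with the minima in \<open>pattern_min\<close>.\<close>

lemma relaxed_point_split:
  assumes "0 < s" "s < 1"
    and entries: "\<forall>i\<in>V. \<forall>p\<in>P. y i p = 0 \<or> (s \<le> y i p \<and> y i p \<le> 1)"
  shows "relaxed_point y = convex_comb s
           (relaxed_point (\<lambda>i p. if 0 < y i p then 1 else 0))
           (relaxed_point (\<lambda>i p. max 0 ((y i p - s) / (1 - s))))"
proof -
  define g :: "real \<Rightarrow> real" where "g u = (if 0 < u then 1 else 0)" for u
  define f where "f u = max 0 ((u - s) / (1 - s))" for u :: real
  have "mono g" by (auto simp: mono_def g_def)
  have "mono f"
  proof (rule monoI)
    fix u w :: real assume "u \<le> w"
    then have "(u - s) / (1 - s) \<le> (w - s) / (1 - s)" using \<open>s < 1\<close> by (intro divide_right_mono) auto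
    then show "f u \<le> f w" by (auto simp: f_def max_def)
  qed
  have split: "u = s * g u + (1 - s) * f u" if "u = 0 \<or> (s \<le> u \<and> u \<le> 1)" for u
    using that assms(1,2) by (auto simp: g_def f_def field_simps)
  have "pattern_min y C d
      = s * pattern_min (\<lambda>i p. g (y i p)) C d + (1 - s) * pattern_min (\<lambda>i p. f (y i p)) C d"
    if "C \<in> Cs" "d \<in> D C" for C d
  proof -
    have C: "finite C" "C \<noteq> {}" using that finite_hyperedge hyperedge by auto
    have "pattern_min y C d \<in> (\<lambda>l. y l (d l)) ` C"
      unfolding pattern_min_def using C by (intro Min_in) auto
    then obtain l where "l \<in> C" "pattern_min y C d = y l (d l)" by blast
    then have "pattern_min y C d = 0 \<or> (s \<le> pattern_min y C d \<and> pattern_min y C d \<le> 1)"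
      using entries labeling_entry[OF that] by simp
    then show ?thesis
      unfolding pattern_min_mono_comp[OF \<open>mono g\<close> C] pattern_min_mono_comp[OF \<open>mono f\<close> C]
      by (rule split)
  qed
  moreover have "residual y i
      = s * residual (\<lambda>i p. g (y i p)) i + (1 - s) * residual (\<lambda>i p. f (y i p)) i" for i
    using entries split by (intro residual_convex_comb) auto
  ultimately show ?thesis
    unfolding relaxed_point_def convex_comb_def g_def[symmetric] f_def[symmetric]
    by (simp add: lp_obj_convex_comb fun_eq_iff)
qed

definition fractional_entries :: "('v \<Rightarrow> 'p \<Rightarrow> real) \<Rightarrow> ('v \<times> 'p) set"
  where "fractional_entries y = {(i, p) \<in> V \<times> P. 0 < y i p \<and> y i p < 1}"

lemma finite_fractional_entries: "finite (fractional_entries y)"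
  by (rule finite_subset[of _ "V \<times> P"]) (auto simp: fractional_entries_def finite_V finite_P)

lemma binary_if_no_fractional_entries:
  assumes "fractional_entries y = {}" "\<forall>i\<in>V. \<forall>p\<in>P. 0 \<le> y i p \<and> y i p \<le> 1"
  shows "binary_y V P y"
  unfolding binary_y_def
proof (intro ballI)
  fix i p assume "i \<in> V" "p \<in> P"
  moreover have "(i, p) \<notin> fractional_entries y" using assms(1) by simp
  ultimately show "y i p \<in> {0, 1}" using assms(2) by (force simp: fractional_entries_def)
qed

lemma fractional_entries_rescale_psubset:
  assumes "0 < s" "s < 1"
    and entries: "\<forall>i\<in>V. \<forall>p\<in>P. y i p = 0 \<or> (s \<le> y i p \<and> y i p \<le> 1)"
    and "(i0, p0) \<in> fractional_entries y" "y i0 p0 = s"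
  shows "fractional_entries (\<lambda>i p. max 0 ((y i p - s) / (1 - s))) \<subset> fractional_entries y"
    (is "fractional_entries ?y' \<subset> _")
proof -
  have one: "?y' i p = 1" if "y i p = 1" for i p using that assms(2) by simp
  have zero: "?y' i p = 0" if "y i p = 0" for i p
  proof -
    have "(y i p - s) / (1 - s) \<le> 0" using that assms(1,2) by (intro divide_nonpos_pos) auto
    then show ?thesis by simp
  qed
  have "(i, p) \<in> fractional_entries y" if "(i, p) \<in> fractional_entries ?y'" for i p
  proof -
    have ip: "i \<in> V" "p \<in> P" "0 < ?y' i p" "?y' i p < 1"
      using that by (auto simp: fractional_entries_def)
    then have "y i p \<noteq> 0" "y i p \<noteq> 1" using one[of i p] zero[of i p] by auto
    moreover have "y i p = 0 \<or> (s \<le> y i p \<and> y i p \<le> 1)" using entries ip(1,2) by blast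
    ultimately show ?thesis using ip(1,2) assms(1) by (auto simp: fractional_entries_def)
  qed
  moreover have "(i0, p0) \<notin> fractional_entries ?y'"
    using assms(2,5) by (simp add: fractional_entries_def)
  ultimately show ?thesis using assms(4) by auto
qed

lemma relaxed_point_in_conv_hull:
  "\<forall>i\<in>V. \<forall>p\<in>P. 0 \<le> y i p \<and> y i p \<le> 1 \<Longrightarrow> relaxed_point y \<in> conv_hull integral_points"
proof (induction "card (fractional_entries y)" arbitrary: y rule: less_induct)
  case less
  show ?case
  proof (cases "fractional_entries y = {}")
    case True
    then have "binary_y V P y" using less.prems by (rule binary_if_no_fractional_entries)
    then show ?thesis by (intro hull_base relaxed_point_in_integral_points)
  next
    case False
    define s where "s = Min ((\<lambda>(i, p). y i p) ` fractional_entries y)"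
    have "s \<in> (\<lambda>(i, p). y i p) ` fractional_entries y"
      unfolding s_def using finite_fractional_entries False by (intro Min_in) auto
    then obtain i0 p0 where ip0: "(i0, p0) \<in> fractional_entries y" "y i0 p0 = s" by auto
    then have s: "0 < s" "s < 1" by (auto simp: fractional_entries_def)
    have entries: "\<forall>i\<in>V. \<forall>p\<in>P. y i p = 0 \<or> (s \<le> y i p \<and> y i p \<le> 1)"
    proof (intro ballI)
      fix i p assume "i \<in> V" "p \<in> P"
      moreover have "(i, p) \<in> fractional_entries y \<Longrightarrow> s \<le> y i p"
        unfolding s_def using finite_fractional_entries by (auto intro: Min_le)
      ultimately show "y i p = 0 \<or> (s \<le> y i p \<and> y i p \<le> 1)"
        using less.prems s by (force simp: fractional_entries_def)
    qed
    define \<chi> where "\<chi> i p = (if 0 < y i p then 1 else 0 :: real)" for i p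
    define y' where "y' i p = max 0 ((y i p - s) / (1 - s))" for i p
    have "card (fractional_entries \<chi>) < card (fractional_entries y)"
      using False finite_fractional_entries by (simp add: fractional_entries_def \<chi>_def card_gt_0_iff)
    then have "relaxed_point \<chi> \<in> conv_hull integral_points"
      by (intro less.hyps) (simp_all add: \<chi>_def)
    moreover have "card (fractional_entries y') < card (fractional_entries y)"
      unfolding y'_def using fractional_entries_rescale_psubset[OF s entries ip0]
      by (intro psubset_card_mono finite_fractional_entries)
    then have "relaxed_point y' \<in> conv_hull integral_points"
      using less.prems s by (intro less.hyps) (simp_all add: y'_def divide_le_eq_1)
    moreover have "relaxed_point y = convex_comb s (relaxed_point \<chi>) (relaxed_point y')"
      unfolding \<chi>_def y'_def using s entries by (rule relaxed_point_split)
    ultimately show ?thesis using s by (simp add: hull_comb)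
  qed
qed

lemma lp_feasible_relaxed_point:
  assumes "lp_feasible V P Cs D yv yc"
  shows "relaxed_point yv \<in> conv_hull integral_points"
    and "\<forall>i\<in>V. fst (relaxed_point yv) i = 0"
    and "snd (relaxed_point yv) \<le> lp_obj Cs D th yc"
proof -
  show "relaxed_point yv \<in> conv_hull integral_points"
    using assms by (intro relaxed_point_in_conv_hull) (simp add: lp_feasible_def)
  show "\<forall>i\<in>V. fst (relaxed_point yv) i = 0"
    using assms by (simp add: lp_feasible_iff_lp_box relaxed_point_def)
  have "th C d * pattern_min yv C d \<le> th C d * yc C d" if "C \<in> Cs" "d \<in> D C" for C d
  proof (rule mult_left_mono_neg)
    show "yc C d \<le> pattern_min yv C d"
      unfolding pattern_min_def using assms that finite_hyperedge hyperedge
      by (intro Min.boundedI) (auto simp: lp_feasible_def)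
  qed (rule th_nonpos[OF that])
  then show "snd (relaxed_point yv) \<le> lp_obj Cs D th yc"
    by (simp add: relaxed_point_def lp_obj_def sum_mono)
qed

lemma ex_lp_feasible: "\<exists>yv yc. lp_feasible V P Cs D yv yc"
proof -
  obtain p0 where "p0 \<in> P" using P_nonempty by blast
  then have "lp_feasible V P Cs D (\<lambda>i p. if p = p0 then 1 else 0) (\<lambda>C d. 0)"
    using finite_P by (simp add: lp_feasible_def)
  then show ?thesis by blast
qed

section \<open>Strong duality\<close>

lemma lagr_dual_le_hull_value:
  assumes "x \<in> conv_hull integral_points" "\<forall>i\<in>V. fst x i = 0"
  shows "lagr_dual V P Cs D th lam \<le> snd x"
proof -
  have "lagr_dual V P Cs D th lam \<le> snd k + (\<Sum>i\<in>V. lam i * fst k i)" if "k \<in> integral_points" for k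
    using that finite_integral_points by (simp add: lagr_dual_eq_Min)
  then show ?thesis using conv_hull_affine_lower_bound[OF assms(1)] assms(2) by fastforce
qed

lemma ex_multipliers_lagr_dual:
  assumes up: "\<And>s t. Q s \<Longrightarrow> s \<le> t \<Longrightarrow> Q t" and "Q c"
    and bound: "\<And>x. x \<in> conv_hull integral_points \<Longrightarrow> \<forall>i\<in>V. fst x i = 0 \<Longrightarrow> Q (snd x)"
  shows "\<exists>lam. Q (lagr_dual V P Cs D th lam)"
proof -
  obtain lam where lam: "\<forall>k\<in>integral_points. Q (snd k + (\<Sum>i\<in>V. lam i * fst k i))"
    using fourier_motzkin_multipliers[where I = V and K = integral_points and Q = Q and c = c]
      finite_V finite_integral_points up \<open>Q c\<close> bound by blast
  obtain k where "k \<in> integral_points" "lagr_dual V P Cs D th lam = snd k + (\<Sum>i\<in>V. lam i * fst k i)"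
    using lagr_dual_attained by blast
  then have "Q (lagr_dual V P Cs D th lam)" using lam by simp
  then show ?thesis by blast
qed

text \<open>The nonstrict instance of \<open>ex_multipliers_lagr_dual\<close> shows that the dual reaches the
  infimum \<open>v\<close> of the hull section, the strict instance that this infimum is attained.\<close>

lemma hull_strong_duality:
  obtains x0 lam0 where "x0 \<in> conv_hull integral_points" "\<forall>i\<in>V. fst x0 i = 0"
    and "\<And>x. x \<in> conv_hull integral_points \<Longrightarrow> \<forall>i\<in>V. fst x i = 0 \<Longrightarrow> snd x0 \<le> snd x"
    and "lagr_dual V P Cs D th lam0 = snd x0"
proof -
  define hull_values where
    "hull_values = {snd x | x. x \<in> conv_hull integral_points \<and> (\<forall>i\<in>V. fst x i = 0)}"
  define v where "v = Inf hull_values"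
  obtain yv yc where "lp_feasible V P Cs D yv yc" using ex_lp_feasible by blast
  then have "snd (relaxed_point yv) \<in> hull_values"
    using lp_feasible_relaxed_point unfolding hull_values_def by blast
  then have "hull_values \<noteq> {}" by blast
  have "bdd_below hull_values"
    using lagr_dual_le_hull_value unfolding hull_values_def bdd_below_def by blast
  then have v_le: "v \<le> s" if "s \<in> hull_values" for s
    unfolding v_def using that by (rule cInf_lower[rotated])
  have dual_le: "lagr_dual V P Cs D th lam \<le> v" for lam
    unfolding v_def using \<open>hull_values \<noteq> {}\<close> lagr_dual_le_hull_value
    by (intro cInf_greatest) (auto simp: hull_values_def)
  have "\<exists>lam. v \<le> lagr_dual V P Cs D th lam"
  proof (rule ex_multipliers_lagr_dual[where c = v])
    fix x assume "x \<in> conv_hull integral_points" "\<forall>i\<in>V. fst x i = 0"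
    then show "v \<le> snd x" by (intro v_le) (unfold hull_values_def, blast)
  qed auto
  then obtain lam0 where "v \<le> lagr_dual V P Cs D th lam0" ..
  then have dual_v: "lagr_dual V P Cs D th lam0 = v" using dual_le[of lam0] by simp
  have "\<exists>s\<in>hull_values. s \<le> v"
  proof (rule ccontr)
    assume no_point: "\<not> (\<exists>s\<in>hull_values. s \<le> v)"
    have "\<exists>lam. v < lagr_dual V P Cs D th lam"
    proof (rule ex_multipliers_lagr_dual[where c = "v + 1"])
      fix x assume "x \<in> conv_hull integral_points" "\<forall>i\<in>V. fst x i = 0"
      then have "snd x \<in> hull_values" unfolding hull_values_def by blast
      then show "v < snd x" using no_point by force
    qed auto
    then show False using dual_le leD by blast
  qed
  then obtain x0 where x0: "x0 \<in> conv_hull integral_points" "\<forall>i\<in>V. fst x0 i = 0" "snd x0 \<le> v"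
    unfolding hull_values_def by blast
  then have "snd x0 = v" using v_le[of "snd x0"] unfolding hull_values_def by fastforce
  show ?thesis
  proof (rule that[of x0 lam0, OF x0(1,2)])
    fix x assume "x \<in> conv_hull integral_points" "\<forall>i\<in>V. fst x i = 0"
    then show "snd x0 \<le> snd x"
      using v_le \<open>snd x0 = v\<close> unfolding hull_values_def by blast
  qed (simp add: dual_v \<open>snd x0 = v\<close>)
qed

lemma lagr_dual_lp_strong_duality:
  "\<exists>lam0 yv0 yc0.
     (\<forall>lam. lagr_dual V P Cs D th lam \<le> lagr_dual V P Cs D th lam0) \<and>
     lp_feasible V P Cs D yv0 yc0 \<and>
     (\<forall>yv yc. lp_feasible V P Cs D yv yc \<longrightarrow> lp_obj Cs D th yc0 \<le> lp_obj Cs D th yc) \<and>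
     lagr_dual V P Cs D th lam0 = lp_obj Cs D th yc0"
proof -
  obtain x0 lam0 where x0: "x0 \<in> conv_hull integral_points" "\<forall>i\<in>V. fst x0 i = 0"
    and min: "\<And>x. x \<in> conv_hull integral_points \<Longrightarrow> \<forall>i\<in>V. fst x i = 0 \<Longrightarrow> snd x0 \<le> snd x"
    and dual: "lagr_dual V P Cs D th lam0 = snd x0"
    using hull_strong_duality by blast
  obtain yv0 yc0 where "lp_box yv0 yc0" "x0 = (residual yv0, lp_obj Cs D th yc0)"
    using conv_hull_integral_points_lp_box[OF x0(1)] by blast
  then have feasible: "lp_feasible V P Cs D yv0 yc0" and obj: "lp_obj Cs D th yc0 = snd x0"
    using x0(2) by (auto simp: lp_feasible_iff_lp_box)
  have "lp_obj Cs D th yc0 \<le> lp_obj Cs D th yc" if "lp_feasible V P Cs D yv yc" for yv yc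
    using min[OF lp_feasible_relaxed_point(1,2)[OF that]] lp_feasible_relaxed_point(3)[OF that] obj
    by simp
  moreover have "lagr_dual V P Cs D th lam \<le> lagr_dual V P Cs D th lam0" for lam
    using lagr_dual_le_hull_value[OF x0] dual by simp
  ultimately show ?thesis using feasible obj dual by metis
qed

end

theorem theorem5:
  fixes V :: "'v set" and P :: "'p set" and Cs :: "'v set set"
    and D :: "'v set \<Rightarrow> ('v \<Rightarrow> 'p) set"
    and th :: "'v set \<Rightarrow> ('v \<Rightarrow> 'p) \<Rightarrow> real"
  assumes "finite V" and "finite P" and "P \<noteq> {}"
    and "finite Cs"
    and "\<And>C. C \<in> Cs \<Longrightarrow> C \<noteq> {} \<and> C \<subseteq> V"
    and "\<And>C. C \<in> Cs \<Longrightarrow> D C \<subseteq> (C \<rightarrow>\<^sub>E P)"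
    and "\<And>C d. C \<in> Cs \<Longrightarrow> d \<in> D C \<Longrightarrow> th C d \<le> 0"
  shows "\<exists>lam0 yv0 yc0.
           (\<forall>lam. lagr_dual V P Cs D th lam \<le> lagr_dual V P Cs D th lam0) \<and>
           lp_feasible V P Cs D yv0 yc0 \<and>
           (\<forall>yv yc. lp_feasible V P Cs D yv yc \<longrightarrow> lp_obj Cs D th yc0 \<le> lp_obj Cs D th yc) \<and>
           lagr_dual V P Cs D th lam0 = lp_obj Cs D th yc0"
proof -
  interpret sparse_pattern_energy V P Cs D th
    using assms by unfold_locales
  show ?thesis by (rule lagr_dual_lp_strong_duality)
qed

end
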